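(* Fix an integer $l\ge0$. For every sufficiently large odd prime $r$, with $q=e^{2\pi\sqrt{-1}/r}$, one can write $$\left(\tfrac{r-1}{2}\right)!\,G_{2l}(q)=\sum_{m=0}^{(r-3)/2}a_{r,m}\,(q-1)^{\frac{r-1}{2}-l+m}+(q-1)^{r-1-l}\,u_r$$ with $a_{r,m}\in\mathbb{Z}_{(r)}$ and $u_r\in\mathbb{Z}_{(r)}[q]$, such that for each fixed $m\ge0$ the function $r\mapsto a_{r,m}$ is a Fermat function with residue $g'_{l,m}$. (In the paper's terminology: with respect to $l(r)=\frac{r-3}{2}$, the Fermat limit of $\left(\frac{r-1}{2}\right)!\,G_{2l}(q)/(q-1)^{\frac{r-1}{2}-l}$ is $\sum_{m\ge0}g'_{l,m}(t-1)^m$.)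
   Context: $G_{2l}(q)=\sum_{k=0}^{r-1}k^{2l}q^{k^2}$ is the weighted Gauss sum. $\mathbb{Z}_{(m)}=\mathbb{Z}[\frac12,\dots,\frac1{m-1}]$ for $m\ge3$, $\mathbb{Z}_{(m)}=\mathbb{Z}$ for $m\le2$. A function $r\mapsto f(r)\in\mathbb{Z}_{(r)}$ on large primes is a Fermat function with residue $\lambda\in\mathbb{Q}$ if $f(r)\equiv\lambda\pmod r$ for all large primes $r$. $\sigma_j$ denotes the $j$-th elementary symmetric polynomial ($\sigma_0=1$), and $g'_{l,m}$ is the residue of the Fermat function $H_{l,m}(r)=\frac{((r-1)/2)!}{((r-1)/2-l+m)!}(-1)^{m+1}\sigma_m(1,2,\dots,\frac{r-1}{2}-l+m-1)$. *)

theory Defs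
  imports "HOL-Analysis.Analysis" "HOL-Computational_Algebra.Polynomial"
begin

text \<open>Z_(m) = Z[1/2,...,1/(m-1)] as a subset of the rationals: rationals whose
  reduced denominator has only prime factors < m (for m <= 2 this is Z).\<close>
definition Zloc :: "nat \<Rightarrow> rat set" where
  "Zloc m = {x. \<forall>p::nat. prime p \<and> int p dvd snd (quotient_of x) \<longrightarrow> p < m}"

definition rat_cong :: "rat \<Rightarrow> rat \<Rightarrow> nat \<Rightarrow> bool" where
  "rat_cong a b r \<longleftrightarrow> int r dvd fst (quotient_of (a - b))"

definition fermat_fun :: "(nat \<Rightarrow> rat) \<Rightarrow> rat \<Rightarrow> bool" where
  "fermat_fun f c \<longleftrightarrow> (\<exists>R. \<forall>r. prime r \<and> r \<ge> R \<longrightarrow> f r \<in> Zloc r \<and> rat_cong (f r) c r)"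

definition wgauss :: "nat \<Rightarrow> nat \<Rightarrow> complex \<Rightarrow> complex" where
  "wgauss r j q = (\<Sum>k<r. of_nat k ^ j * q ^ (k^2))"

definition esym :: "nat \<Rightarrow> nat set \<Rightarrow> rat" where
  "esym m S = (\<Sum>T\<in>{T. T \<subseteq> S \<and> card T = m}. \<Prod>x\<in>T. of_nat x)"

definition Hfun :: "nat \<Rightarrow> nat \<Rightarrow> nat \<Rightarrow> rat" where
  "Hfun l m r = (let N = (r - 1) div 2 + m - l in
     fact ((r - 1) div 2) / fact N * (-1) ^ (m + 1) * esym m {1..<N})"

end

(* Put x = q - 1. Expanding q^(k^2) = (1 + x)^(k^2) gives G_2l(q) = sum_j C_j x^j with
   C_j = sum_{k<r} k^(2l) binom(k^2, j). Writing j! binom(n, j) = prod_{i<j} (n - i) through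
   elementary symmetric functions turns j! C_j into a combination of power sums sum_{k<r} k^d, and
   such a sum is -1 mod r if d > 0 and (r - 1) | d, and 0 mod r otherwise. Hence exactly one term
   survives: with h = (r - 1)/2, C_j = 0 mod r for l + j < h, and h! C_(h+m-l) = H_{l,m}(r) mod r.
   Since r = (q - 1)^(r-1) W with W in Z_(r)[q], the terms divisible by r are absorbed into the
   remainder (q - 1)^(r-1-l) u_r. Finally H_{l,m}(r) is a Fermat function because
   sigma_m(1, ..., n - 1) is a polynomial in n and h = -1/2 mod r. *)

theory Submission
  imports "HOL-Number_Theory.Residues" Defs
    (* in this order, so that coeff is Polynomial.coeff and not that of HOL-Algebra *)
begin

section \<open>The ring Z_(r) and congruence modulo r\<close>

definition smooth_below :: "nat \<Rightarrow> int \<Rightarrow> bool" where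
  "smooth_below r b \<longleftrightarrow> b \<noteq> 0 \<and> (\<forall>p::nat. prime p \<and> int p dvd b \<longrightarrow> p < r)"

lemma smooth_below_mult:
  assumes "smooth_below r b" "smooth_below r b'"
  shows "smooth_below r (b * b')"
  unfolding smooth_below_def
proof (intro conjI allI impI)
  show "b * b' \<noteq> 0" using assms by (simp add: smooth_below_def)
  fix p :: nat
  assume p: "prime p \<and> int p dvd b * b'"
  then have "int p dvd b \<or> int p dvd b'"
    by (metis prime_dvd_multD prime_nat_int_transfer)
  then show "p < r" using assms p unfolding smooth_below_def by blast
qed

lemma smooth_below_of_nat:
  assumes "0 < n" "n < r"
  shows "smooth_below r (int n)"
  using assms unfolding smooth_below_def by (auto dest: dvd_imp_le)

lemma smooth_below_fact:
  assumes "n < r"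
  shows "smooth_below r (fact n)"
  using assms unfolding smooth_below_def
  by (metis fact_nonzero int_dvd_int_iff of_nat_fact of_nat_eq_0_iff order.strict_trans1 prime_dvd_fact_iff)

lemma Zloc_iff_fraction:
  "x \<in> Zloc r \<longleftrightarrow> (\<exists>a b. smooth_below r b \<and> x = of_int a / of_int b)"
proof
  assume x: "x \<in> Zloc r"
  obtain n d where nd: "quotient_of x = (n, d)" by (cases "quotient_of x")
  have "smooth_below r d"
    using x nd quotient_of_denom_pos[OF nd] by (simp add: Zloc_def smooth_below_def)
  then show "\<exists>a b. smooth_below r b \<and> x = of_int a / of_int b"
    using quotient_of_div[OF nd] by blast
next
  assume "\<exists>a b. smooth_below r b \<and> x = of_int a / of_int b"
  then obtain a b where b: "smooth_below r b" and x: "x = of_int a / of_int b" by blast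
  obtain n d where nd: "quotient_of x = (n, d)" by (cases "quotient_of x")
  have "of_int n / of_int d = (of_int a / of_int b :: rat)"
    using quotient_of_div[OF nd] x by simp
  moreover have "b \<noteq> 0" "d \<noteq> 0"
    using b quotient_of_denom_pos[OF nd] by (auto simp: smooth_below_def)
  ultimately have "of_int (n * b) = (of_int (a * d) :: rat)"
    by (simp add: field_simps)
  then have nb: "n * b = a * d" by (simp only: of_int_eq_iff)
  have "int p dvd b" if p: "prime p" "int p dvd d" for p :: nat
  proof -
    have "\<not> int p dvd n"
      using quotient_of_coprime[OF nd] p
      by (metis coprime_common_divisor not_prime_unit prime_nat_int_transfer)
    moreover have "int p dvd n * b" using nb p(2) by simp
    ultimately show ?thesis using p(1) by (metis prime_dvd_multD prime_nat_int_transfer)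
  qed
  then show "x \<in> Zloc r" using b nd unfolding Zloc_def smooth_below_def by auto
qed

lemma Zloc_inverse:
  "smooth_below r b \<Longrightarrow> 1 / of_int b \<in> Zloc r"
  unfolding Zloc_iff_fraction by (metis of_int_1)

lemma Zloc_of_int [simp]: "of_int a \<in> Zloc r"
  unfolding Zloc_iff_fraction smooth_below_def
  by (intro exI[of _ a] exI[of _ 1]) (auto simp: prime_nat_iff)

lemma Zloc_of_nat [simp]: "of_nat n \<in> Zloc r"
  using Zloc_of_int[of "int n" r] by simp

lemma Zloc_0 [simp]: "0 \<in> Zloc r" and Zloc_1 [simp]: "1 \<in> Zloc r"
  using Zloc_of_int[of 0 r] Zloc_of_int[of 1 r] by simp_all

lemma Zloc_fact [simp]: "fact n \<in> Zloc r"
  by (metis Zloc_of_nat of_nat_fact)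

lemma Zloc_add [simp, intro]:
  assumes "x \<in> Zloc r" "y \<in> Zloc r"
  shows "x + y \<in> Zloc r"
proof -
  obtain a b a' b' where b: "smooth_below r b" "smooth_below r b'"
    and xy: "x = of_int a / of_int b" "y = of_int a' / of_int b'"
    using assms unfolding Zloc_iff_fraction by blast
  have "b \<noteq> 0" "b' \<noteq> 0" using b by (auto simp: smooth_below_def)
  then have "x + y = of_int (a * b' + a' * b) / of_int (b * b')"
    unfolding xy by (simp add: field_simps)
  then show ?thesis unfolding Zloc_iff_fraction using smooth_below_mult[OF b] by blast
qed

lemma Zloc_mult [simp, intro]:
  assumes "x \<in> Zloc r" "y \<in> Zloc r"
  shows "x * y \<in> Zloc r"
proof -
  obtain a b a' b' where b: "smooth_below r b" "smooth_below r b'"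
    and xy: "x = of_int a / of_int b" "y = of_int a' / of_int b'"
    using assms unfolding Zloc_iff_fraction by blast
  then have "x * y = of_int (a * a') / of_int (b * b')" by simp
  then show ?thesis unfolding Zloc_iff_fraction using smooth_below_mult[OF b] by blast
qed

lemma Zloc_uminus [simp, intro]: "x \<in> Zloc r \<Longrightarrow> - x \<in> Zloc r"
  using Zloc_mult[OF Zloc_of_int[of "-1"]] by simp

lemma Zloc_diff [simp, intro]: "x \<in> Zloc r \<Longrightarrow> y \<in> Zloc r \<Longrightarrow> x - y \<in> Zloc r"
  using Zloc_add[OF _ Zloc_uminus] by simp

lemma Zloc_power [simp, intro]: "x \<in> Zloc r \<Longrightarrow> x ^ n \<in> Zloc r"
  by (induction n) auto

lemma Zloc_sum [intro]: "(\<And>i. i \<in> A \<Longrightarrow> f i \<in> Zloc r) \<Longrightarrow> sum f A \<in> Zloc r"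
  by (induction A rule: infinite_finite_induct) auto

lemma Zloc_prod [intro]: "(\<And>i. i \<in> A \<Longrightarrow> f i \<in> Zloc r) \<Longrightarrow> prod f A \<in> Zloc r"
  by (induction A rule: infinite_finite_induct) auto

lemma Zloc_poly [intro]: "(\<And>i. coeff P i \<in> Zloc r) \<Longrightarrow> x \<in> Zloc r \<Longrightarrow> poly P x \<in> Zloc r"
  unfolding poly_altdef by auto

lemma Zloc_inverse_of_nat: "0 < n \<Longrightarrow> n < r \<Longrightarrow> 1 / of_nat n \<in> Zloc r"
  using Zloc_inverse[OF smooth_below_of_nat] by simp

lemma Zloc_inverse_fact: "n < r \<Longrightarrow> 1 / fact n \<in> Zloc r"
  using Zloc_inverse[OF smooth_below_fact] by simp

lemma eventually_Zloc: "\<forall>\<^sub>F r in sequentially. x \<in> Zloc r"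
proof -
  obtain a b where "x = of_int a / of_int b" "b > 0"
    using quotient_of_div quotient_of_denom_pos by (metis surj_pair)
  moreover have "smooth_below r b" if "nat b < r" for r
    using that \<open>b > 0\<close> unfolding smooth_below_def by (auto dest!: zdvd_imp_le)
  ultimately show ?thesis
    unfolding Zloc_iff_fraction eventually_sequentially by (metis Suc_le_lessD)
qed

lemma eventually_coeffs_Zloc: "\<forall>\<^sub>F r in sequentially. \<forall>i. coeff P i \<in> Zloc r"
proof -
  have "\<forall>\<^sub>F r in sequentially. \<forall>i\<in>{..degree P}. coeff P i \<in> Zloc r"
    by (intro eventually_ball_finite ballI eventually_Zloc) simp
  then show ?thesis
    by eventually_elim (metis atMost_iff coeff_eq_0 Zloc_0 not_le)
qed

text \<open>Unlike \<^const>\<open>rat_cong\<close>, which only inspects reduced numerators, this congruence is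
  visibly compatible with the ring operations of Z_(r); for prime r it implies
  \<^const>\<open>rat_cong\<close>.\<close>

definition Zloc_cong :: "nat \<Rightarrow> rat \<Rightarrow> rat \<Rightarrow> bool" where
  "Zloc_cong r x y \<longleftrightarrow> (\<exists>z\<in>Zloc r. x - y = of_nat r * z)"

lemma Zloc_cong_refl [simp]: "Zloc_cong r x x"
  unfolding Zloc_cong_def by (intro bexI[of _ 0]) auto

lemma Zloc_cong_add: "Zloc_cong r x y \<Longrightarrow> Zloc_cong r x' y' \<Longrightarrow> Zloc_cong r (x + x') (y + y')"
  unfolding Zloc_cong_def
proof (elim bexE)
  fix z z' assume "z \<in> Zloc r" "x - y = of_nat r * z" "z' \<in> Zloc r" "x' - y' = of_nat r * z'"
  then show "\<exists>z\<in>Zloc r. x + x' - (y + y') = of_nat r * z"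
    by (intro bexI[of _ "z + z'"]) (auto simp: algebra_simps)
qed

lemma Zloc_cong_diff: "Zloc_cong r x y \<Longrightarrow> Zloc_cong r x' y' \<Longrightarrow> Zloc_cong r (x - x') (y - y')"
  unfolding Zloc_cong_def
proof (elim bexE)
  fix z z' assume "z \<in> Zloc r" "x - y = of_nat r * z" "z' \<in> Zloc r" "x' - y' = of_nat r * z'"
  then show "\<exists>z\<in>Zloc r. x - x' - (y - y') = of_nat r * z"
    by (intro bexI[of _ "z - z'"]) (auto simp: algebra_simps)
qed

lemma Zloc_cong_trans: "Zloc_cong r x y \<Longrightarrow> Zloc_cong r y w \<Longrightarrow> Zloc_cong r x w"
  using Zloc_cong_add[of r x y y w] unfolding Zloc_cong_def by simp

lemma Zloc_cong_mult:
  assumes "Zloc_cong r x y" "Zloc_cong r x' y'" "x' \<in> Zloc r" "y \<in> Zloc r"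
  shows "Zloc_cong r (x * x') (y * y')"
proof -
  obtain z z' where z: "z \<in> Zloc r" "x - y = of_nat r * z" and z': "z' \<in> Zloc r" "x' - y' = of_nat r * z'"
    using assms(1,2) unfolding Zloc_cong_def by blast
  have "x * x' - y * y' = (x - y) * x' + y * (x' - y')" by (simp add: algebra_simps)
  also have "\<dots> = of_nat r * (z * x' + y * z')" using z(2) z'(2) by (simp add: algebra_simps)
  finally show ?thesis unfolding Zloc_cong_def using z z' assms(3,4) by blast
qed

lemma Zloc_cong_sum: "(\<And>i. i \<in> A \<Longrightarrow> Zloc_cong r (f i) (g i)) \<Longrightarrow> Zloc_cong r (sum f A) (sum g A)"
  by (induction A rule: infinite_finite_induct) (auto intro: Zloc_cong_add)

lemma Zloc_cong_prod:
  "(\<And>i. i \<in> A \<Longrightarrow> Zloc_cong r (f i) (g i) \<and> f i \<in> Zloc r \<and> g i \<in> Zloc r) \<Longrightarrow>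
    Zloc_cong r (prod f A) (prod g A)"
  by (induction A rule: infinite_finite_induct) (auto intro!: Zloc_cong_mult Zloc_prod)

lemma Zloc_cong_power:
  "Zloc_cong r x y \<Longrightarrow> x \<in> Zloc r \<Longrightarrow> y \<in> Zloc r \<Longrightarrow> Zloc_cong r (x ^ n) (y ^ n)"
  using Zloc_cong_prod[of "{..<n}" r "\<lambda>_. x" "\<lambda>_. y"] by simp

lemma Zloc_cong_poly:
  assumes "\<And>i. coeff P i \<in> Zloc r" "Zloc_cong r x y" "x \<in> Zloc r" "y \<in> Zloc r"
  shows "Zloc_cong r (poly P x) (poly P y)"
  unfolding poly_altdef using assms
  by (intro Zloc_cong_sum Zloc_cong_mult Zloc_cong_refl Zloc_cong_power) auto

lemma Zloc_cong_pochhammer: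
  assumes "Zloc_cong r x y" "x \<in> Zloc r" "y \<in> Zloc r"
  shows "Zloc_cong r (pochhammer x k) (pochhammer y k)"
  unfolding pochhammer_prod using assms by (intro Zloc_cong_prod) (auto intro: Zloc_cong_add)

lemma Zloc_cong_inverse:
  assumes "Zloc_cong r x y" "1 / x \<in> Zloc r" "1 / y \<in> Zloc r" "x \<noteq> 0" "y \<noteq> 0"
  shows "Zloc_cong r (1 / x) (1 / y)"
proof -
  obtain z where z: "z \<in> Zloc r" "x - y = of_nat r * z" using assms(1) unfolding Zloc_cong_def by blast
  have "1 / x - 1 / y = - (x - y) * (1 / x) * (1 / y)" using assms(4,5) by (simp add: field_simps)
  also have "\<dots> = of_nat r * (- z * (1 / x) * (1 / y))" using z(2) by simp
  finally show ?thesis unfolding Zloc_cong_def using z(1) assms(2,3) by blast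
qed

lemma Zloc_cong_Zloc: "Zloc_cong r x y \<Longrightarrow> y \<in> Zloc r \<Longrightarrow> x \<in> Zloc r"
  unfolding Zloc_cong_def by (auto simp: algebra_simps eq_diff_eq)

lemma Zloc_cong_of_int: "[a = b] (mod int r) \<Longrightarrow> Zloc_cong r (of_int a) (of_int b)"
proof -
  assume "[a = b] (mod int r)"
  then obtain k where "a - b = int r * k" by (metis cong_iff_dvd_diff dvdE)
  then have "of_int a - of_int b = (of_nat r :: rat) * of_int k"
    by (metis of_int_diff of_int_mult of_int_of_nat_eq)
  then show ?thesis unfolding Zloc_cong_def by (intro bexI[of _ "of_int k"]) auto
qed

lemma Zloc_cong_imp_rat_cong:
  assumes "prime r" "Zloc_cong r x y"
  shows "rat_cong x y r"
proof -
  obtain z where z: "z \<in> Zloc r" "x - y = of_nat r * z" using assms(2) unfolding Zloc_cong_def by blast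
  obtain a b where b: "smooth_below r b" "z = of_int a / of_int b"
    using z(1) unfolding Zloc_iff_fraction by blast
  obtain n d where nd: "quotient_of (x - y) = (n, d)" by (cases "quotient_of (x - y)")
  have "of_int n / of_int d = (of_nat r * (of_int a / of_int b) :: rat)"
    using quotient_of_div[OF nd] z(2) b(2) by simp
  moreover have "b \<noteq> 0" "d \<noteq> 0"
    using b(1) quotient_of_denom_pos[OF nd] by (auto simp: smooth_below_def)
  ultimately have "of_int (n * b) = (of_int (int r * a * d) :: rat)"
    by (simp add: field_simps)
  then have "n * b = int r * (a * d)" by (simp only: of_int_eq_iff mult.assoc)
  moreover have "\<not> int r dvd b" using b(1) assms(1) unfolding smooth_below_def by blast
  ultimately have "int r dvd n"
    using assms(1) by (metis dvd_triv_left prime_dvd_multD prime_nat_int_transfer)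
  then show ?thesis unfolding rat_cong_def using nd by simp
qed

lemma fermat_funI:
  assumes "\<forall>\<^sub>F r in sequentially. prime r \<longrightarrow> f r \<in> Zloc r \<and> Zloc_cong r (f r) c"
  shows "fermat_fun f c"
  using assms Zloc_cong_imp_rat_cong unfolding fermat_fun_def eventually_sequentially by blast

section \<open>Power sums modulo a prime\<close>

definition power_sum :: "nat \<Rightarrow> nat \<Rightarrow> 'a::comm_semiring_1" where
  "power_sum n d = (\<Sum>k<n. of_nat k ^ d)"

lemma power_sum_Suc: "power_sum (Suc n) d = power_sum n d + of_nat n ^ d"
  by (simp add: power_sum_def)

lemma of_int_power_sum [simp]: "of_int (power_sum n d) = power_sum n d"
  by (simp add: power_sum_def)

lemma Zloc_power_sum [simp]: "power_sum n d \<in> Zloc r"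
  by (simp add: power_sum_def Zloc_sum)

lemma power_Suc_eq_power_sums:
  "(of_nat n :: 'a::comm_semiring_1) ^ Suc e = (\<Sum>i\<le>e. of_nat (Suc e choose i) * power_sum n i)"
proof (induction n)
  case 0
  then show ?case by (simp add: power_sum_def)
next
  case (Suc n)
  have "(of_nat (Suc n) :: 'a) ^ Suc e = (of_nat n + 1) ^ Suc e" by (simp only: of_nat_Suc add.commute)
  also have "\<dots> = (\<Sum>i\<le>Suc e. of_nat (Suc e choose i) * of_nat n ^ i)"
    by (subst binomial_ring) simp
  also have "\<dots> = (\<Sum>i\<le>e. of_nat (Suc e choose i) * of_nat n ^ i) + of_nat n ^ Suc e"
    by simp
  finally show ?case
    using Suc.IH by (simp add: power_sum_Suc distrib_left sum.distrib add_ac)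
qed

lemma prime_dvd_power_sum:
  assumes "prime p" "d < p - 1"
  shows "int p dvd power_sum p d"
  using assms(2)
proof (induction d rule: less_induct)
  case (less d)
  have "int p ^ Suc d = (\<Sum>i<Suc d. int (Suc d choose i) * power_sum p i)"
    by (simp only: power_Suc_eq_power_sums lessThan_Suc_atMost)
  then have "int (Suc d) * power_sum p d = int p ^ Suc d - (\<Sum>i<d. int (Suc d choose i) * power_sum p i)"
    by simp
  moreover have "int p dvd (\<Sum>i<d. int (Suc d choose i) * power_sum p i)"
    using less by (intro dvd_sum dvd_mult) auto
  ultimately have "int p dvd int (Suc d) * power_sum p d" by (simp add: dvd_diff)
  moreover have "\<not> p dvd Suc d"
    using less.prems by (auto dest: dvd_imp_le)
  then have "\<not> int p dvd int (Suc d)" by (metis int_dvd_int_iff)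
  ultimately show ?case
    using assms(1) by (metis prime_dvd_multD prime_nat_int_transfer)
qed

lemma power_cong_power_mod:
  assumes "prime p" "0 < k" "k < p"
  shows "[int k ^ d = int k ^ (d mod (p - 1))] (mod int p)"
proof -
  have "\<not> p dvd k" using assms(2,3) by (auto dest: dvd_imp_le)
  then have "[k ^ (p - 1) = 1] (mod p)" by (rule fermat_theorem[OF assms(1)])
  then have "[(k ^ (p - 1)) ^ (d div (p - 1)) * k ^ (d mod (p - 1)) =
      1 ^ (d div (p - 1)) * k ^ (d mod (p - 1))] (mod p)"
    by (intro cong_mult cong_pow cong_refl)
  then have "[k ^ d = k ^ (d mod (p - 1))] (mod p)"
    by (simp flip: power_mult power_add)
  then show ?thesis by (simp flip: cong_int_iff)
qed

lemma power_sum_cong: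
  assumes "prime p"
  shows "[power_sum p d = (if 0 < d \<and> (p - 1) dvd d then -1 else 0)] (mod int p)"
proof -
  have p2: "p \<ge> 2" using prime_ge_2_nat[OF assms] .
  consider "d = 0" | "0 < d" "(p - 1) dvd d" | "0 < d" "\<not> (p - 1) dvd d" by blast
  then show ?thesis
  proof cases
    case 1
    then show ?thesis using prime_dvd_power_sum[OF assms, of 0] p2 by (simp add: cong_0_iff)
  next
    case 2
    have "[power_sum p d = (\<Sum>k<p. if k = 0 then 0 else 1 :: int)] (mod int p)"
      unfolding power_sum_def
    proof (rule cong_sum)
      fix k assume "k \<in> {..<p}"
      then show "[int k ^ d = (if k = 0 then 0 else 1)] (mod int p)"
        using 2 power_cong_power_mod[OF assms, of k d] by (auto simp: power_0_left)
    qed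
    also have "(\<Sum>k<p. if k = 0 then 0 else 1 :: int) = int p - 1"
      using p2 by (simp add: sum.If_cases Diff_eq[symmetric] of_nat_diff)
    also have "[int p - 1 = -1] (mod int p)" by (simp add: cong_iff_dvd_diff)
    finally show ?thesis using 2 by simp
  next
    case 3
    define d' where "d' = d mod (p - 1)"
    have d': "0 < d'" "d' < p - 1" using 3 p2 unfolding d'_def by (auto simp: mod_greater_zero_iff_not_dvd)
    have "[power_sum p d = (power_sum p d' :: int)] (mod int p)"
      unfolding power_sum_def
    proof (rule cong_sum)
      fix k assume "k \<in> {..<p}"
      then show "[int k ^ d = int k ^ d'] (mod int p)"
        using 3 d' power_cong_power_mod[OF assms, of k d] unfolding d'_def
        by (cases "k = 0") (auto simp: power_0_left)
    qed
    then show ?thesis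
      using 3 prime_dvd_power_sum[OF assms d'(2)] by (simp add: cong_0_iff cong_dvd_iff)
  qed
qed

lemma power_sum_cong_below:
  assumes "prime p" "d < 2 * (p - 1)"
  shows "[power_sum p d = (if d = p - 1 then -1 else 0)] (mod int p)"
proof -
  have "0 < d \<and> (p - 1) dvd d \<longleftrightarrow> d = p - 1"
  proof
    assume "0 < d \<and> (p - 1) dvd d"
    then obtain k where k: "d = (p - 1) * k" "0 < k" by (auto elim!: dvdE)
    then have "(p - 1) * k < (p - 1) * 2" using assms(2) by (simp add: mult.commute)
    then have "k = 1" using k(2) by (simp only: mult_less_cancel1) linarith
    then show "d = p - 1" using k(1) by simp
  next
    assume "d = p - 1"
    then show "0 < d \<and> (p - 1) dvd d" using prime_ge_2_nat[OF assms(1)] by simp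
  qed
  then show ?thesis using power_sum_cong[OF assms(1), of d] by simp
qed

lemma power_sum_poly: "\<exists>P. \<forall>n. poly P (of_nat n) = (power_sum n d :: 'a::field_char_0)"
proof (induction d rule: less_induct)
  case (less d)
  then obtain F where F: "\<And>i n. i < d \<Longrightarrow> poly (F i) (of_nat n) = (power_sum n i :: 'a)"
    by metis
  define P where "P = smult (1 / of_nat (Suc d))
    (monom 1 (Suc d) - (\<Sum>i<d. smult (of_nat (Suc d choose i)) (F i)))"
  have "poly P (of_nat n) = power_sum n d" for n
  proof -
    have "(of_nat n :: 'a) ^ Suc d = (\<Sum>i<Suc d. of_nat (Suc d choose i) * power_sum n i)"
      by (simp only: power_Suc_eq_power_sums lessThan_Suc_atMost)
    then have "(of_nat n :: 'a) ^ Suc d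
        = (\<Sum>i<d. of_nat (Suc d choose i) * power_sum n i) + of_nat (Suc d) * power_sum n d"
      by simp
    then show ?thesis
      unfolding P_def by (simp add: poly_monom poly_sum F field_simps del: of_nat_Suc)
  qed
  then show ?case by blast
qed

lemma summation_poly: "\<exists>P. \<forall>n. poly P (of_nat n) = (\<Sum>k<n. poly Q (of_nat k :: 'a::field_char_0))"
proof -
  obtain F where F: "\<And>d n. poly (F d) (of_nat n) = (power_sum n d :: 'a)"
    using power_sum_poly by metis
  have "poly (\<Sum>i\<le>degree Q. smult (coeff Q i) (F i)) (of_nat n) = (\<Sum>k<n. poly Q (of_nat k))" for n
  proof -
    have "poly (\<Sum>i\<le>degree Q. smult (coeff Q i) (F i)) (of_nat n)
        = (\<Sum>i\<le>degree Q. \<Sum>k<n. coeff Q i * of_nat k ^ i)"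
      by (simp add: poly_sum F power_sum_def sum_distrib_left)
    also have "\<dots> = (\<Sum>k<n. poly Q (of_nat k))"
      by (subst sum.swap) (simp add: poly_altdef)
    finally show ?thesis .
  qed
  then show ?thesis by blast
qed

section \<open>Elementary symmetric functions\<close>

lemma esym_Pow: "finite A \<Longrightarrow> esym m A = (\<Sum>T\<in>Pow A. if card T = m then \<Prod>x\<in>T. of_nat x else 0)"
  unfolding esym_def by (simp add: sum.inter_filter[symmetric] Pow_def)

lemma esym_0 [simp]:
  assumes "finite A"
  shows "esym 0 A = 1"
proof -
  have "{T. T \<subseteq> A \<and> card T = 0} = {{}}" using assms by (auto dest: finite_subset)
  then show ?thesis by (simp add: esym_def)
qed

lemma Zloc_esym [simp]: "esym m A \<in> Zloc r"
  unfolding esym_def by (intro Zloc_sum Zloc_prod) simp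

lemma esym_insert:
  assumes "finite A" "a \<notin> A"
  shows "esym (Suc m) (insert a A) = esym (Suc m) A + of_nat a * esym m A"
proof -
  have fin: "finite T" if "T \<in> Pow A" for T using assms(1) that finite_subset by auto
  have notin: "a \<notin> T" if "T \<in> Pow A" for T using assms(2) that by auto
  have inj: "inj_on (insert a) (Pow A)" unfolding inj_on_def using notin by (metis insert_ident)
  have "esym (Suc m) (insert a A) = esym (Suc m) A +
      (\<Sum>T\<in>insert a ` Pow A. if card T = Suc m then \<Prod>x\<in>T. of_nat x else 0)"
    unfolding esym_Pow[OF assms(1)] esym_Pow[OF finite_insert[THEN iffD2, OF assms(1)]] Pow_insert
    using assms by (intro sum.union_disjoint) auto
  also have "(\<Sum>T\<in>insert a ` Pow A. if card T = Suc m then \<Prod>x\<in>T. of_nat x else 0)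
      = (\<Sum>T\<in>Pow A. if card T = m then of_nat a * (\<Prod>x\<in>T. of_nat x) else 0)"
    unfolding sum.reindex[OF inj] comp_def by (intro sum.cong refl) (simp add: fin notin)
  also have "\<dots> = of_nat a * esym m A"
    unfolding esym_Pow[OF assms(1)] sum_distrib_left by (intro sum.cong refl) simp
  finally show ?thesis .
qed

lemma esym_insert_0: "finite A \<Longrightarrow> esym m (insert 0 A) = esym m A"
  by (cases m; cases "0 \<in> A") (simp_all add: insert_absorb esym_insert)

lemma esym_atLeast0: "esym m {0..<j} = esym m {1..<j}"
proof (cases j)
  case (Suc i)
  then have "{0..<j} = insert 0 {1..<j}" by auto
  then show ?thesis by (simp add: esym_insert_0)
qed simp

lemma prod_diff_eq_esym_sum:
  assumes "finite A"
  shows "(\<Prod>i\<in>A. y - of_nat i) = (\<Sum>s\<le>card A. (-1) ^ s * esym s A * y ^ (card A - s))"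
proof -
  have card: "card T \<le> card A" if "T \<in> Pow A" for T
    using assms that by (simp add: card_mono)
  have "(\<Prod>i\<in>A. y - of_nat i) = (\<Prod>i\<in>A. - of_nat i + y)" by simp
  also have "\<dots> = (\<Sum>T\<in>Pow A. (\<Prod>i\<in>T. - of_nat i) * (\<Prod>i\<in>A - T. y))"
    by (rule prod_add[OF assms])
  also have "\<dots> = (\<Sum>T\<in>Pow A. (-1) ^ card T * (\<Prod>i\<in>T. of_nat i) * y ^ (card A - card T))"
    using assms
    by (intro sum.cong refl) (simp add: prod_uminus card_Diff_subset finite_subset)
  also have "\<dots> = (\<Sum>T\<in>Pow A. \<Sum>s\<le>card A.
      if card T = s then (-1) ^ s * (\<Prod>i\<in>T. of_nat i) * y ^ (card A - s) else 0)"
    using card by (intro sum.cong refl) (simp add: sum.delta)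
  also have "\<dots> = (\<Sum>s\<le>card A. (-1) ^ s * esym s A * y ^ (card A - s))"
    unfolding esym_Pow[OF assms] sum_distrib_left sum_distrib_right
    by (subst sum.swap) (intro sum.cong refl, simp)
  finally show ?thesis .
qed

lemma esym_Suc_initial_segment: "esym (Suc m) {1..<n} = (\<Sum>k<n. of_nat k * esym m {1..<k})"
proof (induction n)
  case 0
  then show ?case by (simp add: esym_def)
next
  case (Suc n)
  show ?case
  proof (cases "n = 0")
    case True
    then show ?thesis by (simp add: esym_def)
  next
    case False
    then have "{1..<Suc n} = insert n {1..<n}" by auto
    then show ?thesis using Suc by (simp add: esym_insert)
  qed
qed

lemma esym_initial_segment_poly: "\<exists>P. \<forall>n. esym m {1..<n} = poly P (of_nat n)"
proof (induction m)
  case 0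
  show ?case by (intro exI[of _ 1]) simp
next
  case (Suc m)
  then obtain P where P: "\<And>n. esym m {1..<n} = poly P (of_nat n)" by blast
  obtain Q where Q: "\<And>n. poly Q (of_nat n) = (\<Sum>k<n. poly ([:0, 1:] * P) (of_nat k :: rat))"
    using summation_poly by metis
  have "esym (Suc m) {1..<n} = (\<Sum>k<n. of_nat k * poly P (of_nat k))" for n
    by (simp only: esym_Suc_initial_segment P)
  then have "esym (Suc m) {1..<n} = poly Q (of_nat n)" for n
    by (simp add: Q)
  then show ?case by blast
qed

section \<open>The coefficients of the Gauss sum at q = 1\<close>

definition gauss_coeff :: "nat \<Rightarrow> nat \<Rightarrow> nat \<Rightarrow> nat" where
  "gauss_coeff r e j = (\<Sum>k<r. k ^ e * (k\<^sup>2 choose j))"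

lemma wgauss_shifted_expansion:
  "wgauss r e (x + 1) = (\<Sum>j\<le>(r - 1)\<^sup>2. of_nat (gauss_coeff r e j) * x ^ j)"
proof -
  have "(x + 1) ^ k\<^sup>2 = (\<Sum>j\<le>(r - 1)\<^sup>2. of_nat (k\<^sup>2 choose j) * x ^ j)" if "k < r" for k
  proof -
    have "(x + 1) ^ k\<^sup>2 = (\<Sum>j\<le>k\<^sup>2. of_nat (k\<^sup>2 choose j) * x ^ j)"
      by (subst binomial_ring) simp
    also have "\<dots> = (\<Sum>j\<le>(r - 1)\<^sup>2. of_nat (k\<^sup>2 choose j) * x ^ j)"
      using that by (intro sum.mono_neutral_left) (auto simp: power_mono)
    finally show ?thesis .
  qed
  then have "wgauss r e (x + 1) = (\<Sum>k<r. \<Sum>j\<le>(r - 1)\<^sup>2. of_nat (k ^ e * (k\<^sup>2 choose j)) * x ^ j)"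
    unfolding wgauss_def by (simp add: sum_distrib_left mult.assoc)
  also have "\<dots> = (\<Sum>j\<le>(r - 1)\<^sup>2. of_nat (gauss_coeff r e j) * x ^ j)"
    unfolding gauss_coeff_def by (subst sum.swap) (simp add: sum_distrib_right)
  finally show ?thesis .
qed

lemma fact_mult_gauss_coeff:
  "fact j * of_nat (gauss_coeff r e j)
    = (\<Sum>s\<le>j. (-1) ^ s * esym s {0..<j} * power_sum r (e + 2 * j - 2 * s) :: rat)"
proof -
  have "(of_nat k :: rat) ^ e * (fact j * of_nat (k\<^sup>2 choose j))
      = (\<Sum>s\<le>j. (-1) ^ s * esym s {0..<j} * of_nat k ^ (e + 2 * j - 2 * s))" for k
  proof -
    have "fact j * of_nat (k\<^sup>2 choose j) = (\<Prod>i\<in>{0..<j}. (of_nat k ^ 2 :: rat) - of_nat i)"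
      by (simp add: binomial_gbinomial gbinomial_prod_rev)
    also have "\<dots> = (\<Sum>s\<le>j. (-1) ^ s * esym s {0..<j} * (of_nat k ^ 2) ^ (j - s))"
      using prod_diff_eq_esym_sum[of "{0..<j}"] by simp
    finally have "(of_nat k :: rat) ^ e * (fact j * of_nat (k\<^sup>2 choose j))
        = (\<Sum>s\<le>j. of_nat k ^ e * ((-1) ^ s * esym s {0..<j} * (of_nat k ^ 2) ^ (j - s)))"
      by (simp only: sum_distrib_left)
    also have "\<dots> = (\<Sum>s\<le>j. (-1) ^ s * esym s {0..<j} * of_nat k ^ (e + 2 * j - 2 * s))"
    proof (intro sum.cong refl)
      fix s assume "s \<in> {..j}"
      then have "e + 2 * j - 2 * s = e + 2 * (j - s)" by simp
      then show "(of_nat k :: rat) ^ e * ((-1) ^ s * esym s {0..<j} * (of_nat k ^ 2) ^ (j - s))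
          = (-1) ^ s * esym s {0..<j} * of_nat k ^ (e + 2 * j - 2 * s)"
        by (simp add: power_add power_mult[symmetric] mult_ac)
    qed
    finally show ?thesis .
  qed
  then have "fact j * of_nat (gauss_coeff r e j)
      = (\<Sum>k<r. \<Sum>s\<le>j. (-1) ^ s * esym s {0..<j} * (of_nat k :: rat) ^ (e + 2 * j - 2 * s))"
    unfolding gauss_coeff_def by (simp add: sum_distrib_left mult.left_commute)
  then show ?thesis
    by (subst (asm) sum.swap) (simp add: power_sum_def sum_distrib_left)
qed

lemma gauss_coeff_cong:
  assumes "prime r" "r = 2 * h + 1" "l \<le> h" "l + j \<le> r - 2"
  shows "Zloc_cong r (fact j * of_nat (gauss_coeff r (2 * l) j))
    (if h \<le> l + j then - ((-1) ^ (l + j - h) * esym (l + j - h) {0..<j}) else 0)"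
proof -
  define c where "c s = (-1) ^ s * esym s {0..<j}" for s
  have "Zloc_cong r (fact j * of_nat (gauss_coeff r (2 * l) j))
      (\<Sum>s\<le>j. c s * (if s = l + j - h \<and> h \<le> l + j then - 1 else 0))"
    unfolding fact_mult_gauss_coeff c_def[symmetric]
  proof (rule Zloc_cong_sum)
    fix s assume s: "s \<in> {..j}"
    define d where "d = 2 * l + 2 * j - 2 * s"
    have d_bound: "d < 2 * (r - 1)"
      using assms(2,4) prime_ge_2_nat[OF assms(1)] unfolding d_def by linarith
    have d_eq: "d = r - 1 \<longleftrightarrow> s = l + j - h \<and> h \<le> l + j"
      using s assms(2) unfolding d_def by auto
    have "[power_sum r d = (if s = l + j - h \<and> h \<le> l + j then - 1 else 0 :: int)] (mod int r)"
      using power_sum_cong_below[OF assms(1) d_bound] unfolding d_eq .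
    then have "Zloc_cong r (of_int (power_sum r d))
        (of_int (if s = l + j - h \<and> h \<le> l + j then - 1 else 0))"
      by (rule Zloc_cong_of_int)
    then have "Zloc_cong r (power_sum r d) (if s = l + j - h \<and> h \<le> l + j then - 1 else 0)"
      by (simp only: of_int_power_sum if_distrib[of of_int] of_int_minus of_int_1 of_int_0)
    then show "Zloc_cong r (c s * power_sum r (2 * l + 2 * j - 2 * s))
        (c s * (if s = l + j - h \<and> h \<le> l + j then - 1 else 0))"
      unfolding d_def c_def by (intro Zloc_cong_mult Zloc_cong_refl) auto
  qed
  also have "(\<Sum>s\<le>j. c s * (if s = l + j - h \<and> h \<le> l + j then - 1 else 0))
      = (if h \<le> l + j then - c (l + j - h) else 0)"
  proof -
    have "(\<Sum>s\<le>j. c s * (if s = l + j - h \<and> h \<le> l + j then - 1 else 0))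
        = (\<Sum>s\<le>j. if s = l + j - h then (if h \<le> l + j then - c s else 0) else 0)"
      by (intro sum.cong refl) auto
    moreover have "l + j - h \<le> j" using assms(3) by simp
    ultimately show ?thesis by (simp add: sum.delta)
  qed
  finally show ?thesis unfolding c_def .
qed

lemma gauss_coeff_cong_0:
  assumes "prime r" "r = 2 * h + 1" "l + j < h"
  shows "Zloc_cong r (of_nat (gauss_coeff r (2 * l) j)) 0"
proof -
  have "Zloc_cong r (fact j * of_nat (gauss_coeff r (2 * l) j)) 0"
    using gauss_coeff_cong[OF assms(1,2), of l j] assms(2,3) by simp
  moreover have "1 / fact j \<in> Zloc r" using assms(2,3) by (intro Zloc_inverse_fact) simp
  ultimately have "Zloc_cong r (1 / fact j * (fact j * of_nat (gauss_coeff r (2 * l) j))) (1 / fact j * 0)"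
    by (intro Zloc_cong_mult[OF Zloc_cong_refl]) auto
  then show ?thesis by simp
qed

definition expansion_coeff :: "nat \<Rightarrow> nat \<Rightarrow> nat \<Rightarrow> rat" where
  "expansion_coeff l r m = fact ((r - 1) div 2) * of_nat (gauss_coeff r (2 * l) ((r - 1) div 2 + m - l))"

lemma Zloc_expansion_coeff: "expansion_coeff l r m \<in> Zloc r"
  by (simp add: expansion_coeff_def)

lemma expansion_coeff_cong_Hfun:
  assumes "prime r" "2 * l + 2 * m + 3 \<le> r"
  shows "Zloc_cong r (expansion_coeff l r m) (Hfun l m r)"
proof -
  define h where "h = (r - 1) div 2"
  define j where "j = h + m - l"
  have "odd r" using assms by (intro prime_odd_nat) auto
  then have r: "r = 2 * h + 1" unfolding h_def by (auto elim!: oddE)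
  have hj: "l \<le> h" "l + j \<le> r - 2" "j < r" "h \<le> l + j" "l + j - h = m"
    using assms(2) r unfolding j_def by linarith+
  have "Zloc_cong r (fact j * of_nat (gauss_coeff r (2 * l) j)) (- ((-1) ^ m * esym m {0..<j}))"
    using gauss_coeff_cong[OF assms(1) r hj(1,2)] hj(4,5) by simp
  moreover have "fact h / fact j \<in> Zloc r"
    using Zloc_mult[OF Zloc_fact Zloc_inverse_fact[OF hj(3)]] by simp
  ultimately have "Zloc_cong r (fact h / fact j * (fact j * of_nat (gauss_coeff r (2 * l) j)))
      (fact h / fact j * (- ((-1) ^ m * esym m {0..<j})))"
    by (intro Zloc_cong_mult[OF Zloc_cong_refl]) auto
  then show ?thesis
    unfolding expansion_coeff_def Hfun_def Let_def h_def[symmetric] j_def[symmetric]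
    by (simp add: esym_atLeast0 mult.assoc)
qed

section \<open>The residue of H_{l,m}\<close>

lemma fact_add_div_fact: "fact (n + k) / fact n = (pochhammer (of_nat n + 1) k :: 'a::field_char_0)"
proof -
  have "fact (n + k) = fact n * (pochhammer (of_nat n + 1) k :: 'a)"
    by (simp only: pochhammer_fact pochhammer_product') (simp add: add.commute)
  then show ?thesis by simp
qed

lemma fact_quotient_cong:
  assumes "Zloc_cong r (of_nat n) t" "t \<in> Zloc r"
  shows "Zloc_cong r (fact (n + k) / fact n) (pochhammer (t + 1) k)"
  unfolding fact_add_div_fact using assms
  by (intro Zloc_cong_pochhammer Zloc_cong_add Zloc_cong_refl) auto

lemma inverse_fact_quotient_cong:
  assumes "Zloc_cong r (of_nat n) t" "t \<in> Zloc r" "n + k < r"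
    and "1 / pochhammer (t + 1) k \<in> Zloc r" "pochhammer (t + 1) k \<noteq> 0"
  shows "Zloc_cong r (fact n / fact (n + k)) (1 / pochhammer (t + 1) k)"
proof -
  have "fact n / fact (n + k) = 1 / (pochhammer (of_nat n + 1) k :: rat)"
    by (simp flip: fact_add_div_fact)
  moreover have "fact n / fact (n + k) \<in> Zloc r"
    using Zloc_mult[OF Zloc_fact Zloc_inverse_fact[OF assms(3)]] by simp
  ultimately show ?thesis
    using assms fact_quotient_cong[OF assms(1,2), of k]
    by (auto intro!: Zloc_cong_inverse simp: fact_add_div_fact)
qed

lemma half_index_cong:
  assumes "odd r" "2 < r" "l \<le> (r - 1) div 2 + m"
  shows "Zloc_cong r (of_nat ((r - 1) div 2 + m - l)) (of_nat m - of_nat l - 1 / 2)"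
proof -
  have "1 / 2 \<in> Zloc r" using assms(2) Zloc_inverse_of_nat[of 2 r] by simp
  moreover have "of_nat ((r - 1) div 2 + m - l) - (of_nat m - of_nat l - 1 / 2) = of_nat r * (1 / 2 :: rat)"
    using assms(1,3) by (auto elim!: oddE simp: of_nat_diff)
  ultimately show ?thesis unfolding Zloc_cong_def by blast
qed

text \<open>The residue of ((r-1)/2)! / ((r-1)/2 + m - l)!, obtained from (r-1)/2 = -1/2 mod r.\<close>

definition fact_ratio_residue :: "nat \<Rightarrow> nat \<Rightarrow> rat" where
  "fact_ratio_residue l m = (if m \<le> l then pochhammer (of_nat m - of_nat l + 1 / 2) (l - m)
    else 1 / pochhammer (1 / 2) (m - l))"

lemma fact_ratio_cong:
  assumes "prime r" "2 * l + 2 * m + 3 \<le> r" "fact_ratio_residue l m \<in> Zloc r"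
  shows "Zloc_cong r (fact ((r - 1) div 2) / fact ((r - 1) div 2 + m - l)) (fact_ratio_residue l m)"
proof -
  define h where "h = (r - 1) div 2"
  define j where "j = h + m - l"
  have r: "odd r" "2 < r" using assms(2) prime_odd_nat[OF assms(1)] by auto
  have lh: "l \<le> h" "h + (m - l) < r" using assms(2) r unfolding h_def by auto
  have "1 / 2 \<in> Zloc r" using r(2) Zloc_inverse_of_nat[of 2 r] by simp
  show ?thesis
  proof (cases "m \<le> l")
    case True
    define t :: rat where "t = of_nat m - of_nat l - 1 / 2"
    have "Zloc_cong r (of_nat j) t"
      unfolding j_def h_def t_def using r lh by (intro half_index_cong) (auto simp: h_def)
    moreover have "t \<in> Zloc r" unfolding t_def using \<open>1 / 2 \<in> Zloc r\<close> by auto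
    ultimately have "Zloc_cong r (fact (j + (l - m)) / fact j) (pochhammer (t + 1) (l - m))"
      by (rule fact_quotient_cong)
    moreover have "j + (l - m) = h" "t + 1 = of_nat m - of_nat l + 1 / 2"
      unfolding j_def t_def using True lh by auto
    ultimately show ?thesis
      using True unfolding fact_ratio_residue_def h_def[symmetric] j_def[symmetric] by simp
  next
    case False
    have "Zloc_cong r (of_nat h) (- 1 / 2)"
      using half_index_cong[OF r, of l l] unfolding h_def by simp
    moreover have "j = h + (m - l)" unfolding j_def using False by simp
    moreover have "pochhammer (1 / 2 :: rat) (m - l) \<noteq> 0"
      by (simp add: pochhammer_eq_0_iff)
    ultimately show ?thesis
      using False assms(3) lh \<open>1 / 2 \<in> Zloc r\<close> inverse_fact_quotient_cong[of r h "- 1 / 2" "m - l"]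
      unfolding fact_ratio_residue_def h_def[symmetric] j_def[symmetric] by simp
  qed
qed

lemma Hfun_fermat_residue:
  "\<exists>c. \<forall>\<^sub>F r in sequentially. prime r \<longrightarrow> Hfun l m r \<in> Zloc r \<and> Zloc_cong r (Hfun l m r) c"
proof -
  obtain P where P: "\<And>n. esym m {1..<n} = poly P (of_nat n)"
    using esym_initial_segment_poly by metis
  define t :: rat where "t = of_nat m - of_nat l - 1 / 2"
  define c where "c = fact_ratio_residue l m * (-1) ^ (m + 1) * poly P t"
  have "\<forall>\<^sub>F r in sequentially. 2 * l + 2 * m + 3 \<le> r \<and> 1 / 2 \<in> Zloc r \<and>
      fact_ratio_residue l m \<in> Zloc r \<and> (\<forall>i. coeff P i \<in> Zloc r)"
    by (intro eventually_conj eventually_Zloc eventually_coeffs_Zloc eventually_ge_at_top)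
  then show ?thesis
  proof (intro exI[of _ c], eventually_elim, intro impI)
    case (elim r)
    assume "prime r"
    define h where "h = (r - 1) div 2"
    define j where "j = h + m - l"
    have r: "odd r" "2 < r" using elim prime_odd_nat[OF \<open>prime r\<close>] by auto
    have Zt: "t \<in> Zloc r" unfolding t_def using elim by auto
    have "Zloc_cong r (of_nat j) t"
      unfolding j_def h_def t_def using r elim by (intro half_index_cong) auto
    then have "Zloc_cong r (esym m {1..<j}) (poly P t)"
      unfolding P using elim Zt by (intro Zloc_cong_poly) auto
    moreover have "fact h / fact j \<in> Zloc r"
      using Zloc_mult[OF Zloc_fact Zloc_inverse_fact[of j r]] elim unfolding j_def h_def by auto
    ultimately have "Zloc_cong r (fact h / fact j * (-1) ^ (m + 1) * esym m {1..<j}) c"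
      unfolding c_def h_def j_def using elim fact_ratio_cong[OF \<open>prime r\<close>]
      by (intro Zloc_cong_mult Zloc_cong_refl) auto
    moreover have "Hfun l m r = fact h / fact j * (-1) ^ (m + 1) * esym m {1..<j}"
      unfolding Hfun_def Let_def h_def j_def by simp
    moreover have "c \<in> Zloc r" unfolding c_def using elim Zloc_poly[of P r t] Zt by auto
    ultimately show "Hfun l m r \<in> Zloc r \<and> Zloc_cong r (Hfun l m r) c"
      using Zloc_cong_Zloc by auto
  qed
qed

section \<open>The ring Z_(r)[q]\<close>

inductive_set Zq :: "nat \<Rightarrow> 'a::field_char_0 \<Rightarrow> 'a set" for r :: nat and q :: 'a where
  Zq_of_rat: "c \<in> Zloc r \<Longrightarrow> of_rat c \<in> Zq r q"
| Zq_generator: "q \<in> Zq r q"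
| Zq_add: "a \<in> Zq r q \<Longrightarrow> b \<in> Zq r q \<Longrightarrow> a + b \<in> Zq r q"
| Zq_mult: "a \<in> Zq r q \<Longrightarrow> b \<in> Zq r q \<Longrightarrow> a * b \<in> Zq r q"

lemma Zq_of_int [simp]: "of_int n \<in> Zq r q"
  using Zq_of_rat[of "of_int n" r q] by simp

lemma Zq_of_nat [simp]: "of_nat n \<in> Zq r q"
  using Zq_of_int[of "int n" r q] by simp

lemma Zq_0 [simp]: "0 \<in> Zq r q" and Zq_1 [simp]: "1 \<in> Zq r q"
  using Zq_of_nat[of 0 r q] Zq_of_nat[of 1 r q] by simp_all

lemma Zq_diff: "a \<in> Zq r q \<Longrightarrow> b \<in> Zq r q \<Longrightarrow> a - b \<in> Zq r q"
  using Zq_add[OF _ Zq_mult[OF Zq_of_int[of "-1"]]] by fastforce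

lemma Zq_uminus: "a \<in> Zq r q \<Longrightarrow> - a \<in> Zq r q"
  using Zq_diff[of 0 r q a] by simp

lemma Zq_power: "a \<in> Zq r q \<Longrightarrow> a ^ n \<in> Zq r q"
  by (induction n) (auto intro: Zq_mult)

lemma Zq_sum: "(\<And>i. i \<in> A \<Longrightarrow> f i \<in> Zq r q) \<Longrightarrow> sum f A \<in> Zq r q"
  by (induction A rule: infinite_finite_induct) (auto intro: Zq_add)

lemma map_poly_of_rat_add: "map_poly of_rat (p + p') = map_poly of_rat p + map_poly of_rat p'"
  by (rule poly_eqI) (simp add: coeff_map_poly of_rat_add)

lemma map_poly_of_rat_mult: "map_poly of_rat (p * p') = map_poly of_rat p * map_poly of_rat p'"
  by (rule poly_eqI) (simp add: coeff_map_poly coeff_mult of_rat_sum of_rat_mult)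

lemma Zq_poly_eval:
  "z \<in> Zq r q \<Longrightarrow> \<exists>p. (\<forall>i. coeff p i \<in> Zloc r) \<and> z = poly (map_poly of_rat p) q"
proof (induction rule: Zq.induct)
  case (Zq_of_rat c)
  have "coeff [:c:] i \<in> Zloc r" for i using Zq_of_rat by (cases i) auto
  then show ?case by (intro exI[of _ "[:c:]"]) (simp add: map_poly_pCons)
next
  case Zq_generator
  have "coeff [:0, 1:] i \<in> Zloc r" for i by (cases i) (auto simp: coeff_pCons split: nat.split)
  then show ?case by (intro exI[of _ "[:0, 1:]"]) (simp add: map_poly_pCons)
next
  case (Zq_add a b)
  then obtain p p' where "\<forall>i. coeff p i \<in> Zloc r" "a = poly (map_poly of_rat p) q"
    "\<forall>i. coeff p' i \<in> Zloc r" "b = poly (map_poly of_rat p') q" by blast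
  then show ?case by (intro exI[of _ "p + p'"]) (simp add: map_poly_of_rat_add)
next
  case (Zq_mult a b)
  then obtain p p' where "\<forall>i. coeff p i \<in> Zloc r" "a = poly (map_poly of_rat p) q"
    "\<forall>i. coeff p' i \<in> Zloc r" "b = poly (map_poly of_rat p') q" by blast
  then show ?case
    by (intro exI[of _ "p * p'"]) (auto simp: map_poly_of_rat_mult coeff_mult intro!: Zloc_sum)
qed

lemma binomial_root_relation:
  fixes x :: "'a::field_char_0"
  assumes "(x + 1) ^ r = 1" "x \<noteq> 0" "2 \<le> r" "x \<in> Zq r q"
  shows "\<exists>B\<in>Zq r q. of_nat r * (1 + x * B) = - (x ^ (r - 1))"
proof -
  define B where "B = (\<Sum>j\<in>{2..<r}. of_rat (of_nat (r choose j) / of_nat r) * x ^ (j - 2))"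
  have "B \<in> Zq r q" unfolding B_def
  proof (intro Zq_sum Zq_mult Zq_power Zq_of_rat assms(4))
    fix j assume j: "j \<in> {2..<r}"
    have "j * (r choose j) = r * ((r - 1) choose (j - 1))"
      using j by (intro times_binomial_minus1_eq) auto
    then have "(of_nat (r choose j) / of_nat r :: rat) = of_nat ((r - 1) choose (j - 1)) * (1 / of_nat j)"
      using j by (simp add: field_simps flip: of_nat_mult)
    then show "of_nat (r choose j) / of_nat r \<in> Zloc r"
      using j Zloc_mult[OF Zloc_of_nat Zloc_inverse_of_nat[of j r]] by simp
  qed
  moreover have "of_nat r * (1 + x * B) = - (x ^ (r - 1))"
  proof -
    have "1 = (\<Sum>j\<le>r. of_nat (r choose j) * x ^ j)"
      using assms(1) by (subst (asm) binomial_ring) simp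
    also have "{..r} = insert 0 (insert 1 (insert r {2..<r}))" using assms(3) by auto
    also have "(\<Sum>j\<in>insert 0 (insert 1 (insert r {2..<r})). of_nat (r choose j) * x ^ j)
        = 1 + of_nat r * x + x ^ r + (\<Sum>j\<in>{2..<r}. of_nat (r choose j) * x ^ j)"
      using assms(3) by (simp add: add.assoc)
    finally have "1 = 1 + of_nat r * x + x ^ r + (\<Sum>j\<in>{2..<r}. of_nat (r choose j) * x ^ j)" .
    moreover have "(\<Sum>j\<in>{2..<r}. of_nat (r choose j) * x ^ j) = of_nat r * x * x * B"
      unfolding B_def sum_distrib_left
    proof (intro sum.cong refl)
      fix j assume j: "j \<in> {2..<r}"
      then have "x ^ j = x * x * x ^ (j - 2)" by (metis le_add_diff_inverse atLeastLessThan_iff power_add power2_eq_square)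
      then show "of_nat (r choose j) * x ^ j = of_nat r * x * x * (of_rat (of_nat (r choose j) / of_nat r) * x ^ (j - 2))"
        using assms(3) by (simp add: of_rat_divide)
    qed
    moreover have "x ^ r = x * x ^ (r - 1)" using assms(3) by (simp flip: power_Suc)
    ultimately have "x * (of_nat r * (1 + x * B) + x ^ (r - 1)) = 0" by (simp add: algebra_simps)
    then show ?thesis using assms(2) by (simp add: eq_neg_iff_add_eq_0)
  qed
  ultimately show ?thesis by blast
qed

text \<open>Multiplying r (1 - y) = - x^(r-1), where y = - x B, by 1 + y + ... + y^(r-2) gives
  r = r y^(r-1) - x^(r-1) (1 + ... + y^(r-2)); as r - 1 is even, y^(r-1) = x^(r-1) B^(r-1).\<close>

lemma of_nat_eq_power_mult_Zq:
  fixes q :: "'a::field_char_0"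
  assumes "q ^ r = 1" "q \<noteq> 1" "odd r"
  shows "\<exists>W\<in>Zq r q. of_nat r = (q - 1) ^ (r - 1) * W"
proof -
  define x where "x = q - 1"
  have "r \<noteq> 1" using assms(1,2) by auto
  then have r: "2 \<le> r" using assms(3) by (cases r) auto
  have x: "x \<in> Zq r q" unfolding x_def by (intro Zq_diff Zq_generator Zq_1)
  obtain B where B: "B \<in> Zq r q" "of_nat r * (1 + x * B) = - (x ^ (r - 1))"
    using binomial_root_relation[OF _ _ r x] assms(1,2) unfolding x_def by auto
  define y where "y = - x * B"
  have "of_nat r = of_nat r * (1 - y ^ (r - 1)) + of_nat r * y ^ (r - 1)"
    by (simp add: algebra_simps)
  also have "of_nat r * (1 - y ^ (r - 1)) = of_nat r * (1 - y) * (\<Sum>i<r - 1. y ^ i)"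
    by (simp add: one_diff_power_eq)
  also have "of_nat r * (1 - y) = - (x ^ (r - 1))"
    using B(2) unfolding y_def by simp
  also have "y ^ (r - 1) = x ^ (r - 1) * B ^ (r - 1)"
    using assms(3) unfolding y_def by (simp add: power_mult_distrib)
  finally have "of_nat r = x ^ (r - 1) * (of_nat r * B ^ (r - 1) - (\<Sum>i<r - 1. y ^ i))"
    by (simp add: algebra_simps)
  moreover have "of_nat r * B ^ (r - 1) - (\<Sum>i<r - 1. y ^ i) \<in> Zq r q"
    unfolding y_def using B(1) x by (intro Zq_diff Zq_mult Zq_of_nat Zq_power Zq_sum Zq_uminus)
  ultimately show ?thesis unfolding x_def by blast
qed

lemma Zq_truncate_expansion:
  fixes x :: "'a::field_char_0"
  assumes W: "of_nat r = x ^ (r - 1) * W" "W \<in> Zq r q" and x: "x \<in> Zq r q"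
    and c: "\<And>j. c j \<in> Zloc r" "\<And>j. j < N \<Longrightarrow> Zloc_cong r (c j) 0"
    and NM: "N \<le> M" "M \<le> r - 1" "M \<le> Suc J"
  shows "\<exists>w\<in>Zq r q. (\<Sum>j\<le>J. of_rat (c j) * x ^ j) = (\<Sum>j\<in>{N..<M}. of_rat (c j) * x ^ j) + x ^ M * w"
proof -
  obtain z where z: "\<And>j. j < N \<Longrightarrow> z j \<in> Zloc r \<and> c j = of_nat r * z j"
    using c(2) unfolding Zloc_cong_def by (metis diff_zero)
  define w where "w = (\<Sum>j\<in>{0..<N}. W * of_rat (z j) * x ^ (r - 1 - M + j))
    + (\<Sum>j\<in>{M..<Suc J}. of_rat (c j) * x ^ (j - M))"
  define f where "f j = of_rat (c j) * x ^ j" for j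
  have "(\<Sum>j\<le>J. f j) = (\<Sum>j\<in>{0..<Suc J}. f j)"
    by (simp add: atLeast0LessThan lessThan_Suc_atMost)
  also have "\<dots> = (\<Sum>j\<in>{0..<M}. f j) + (\<Sum>j\<in>{M..<Suc J}. f j)"
    using NM by (intro sum.atLeastLessThan_concat[symmetric]) auto
  also have "(\<Sum>j\<in>{0..<M}. f j) = (\<Sum>j\<in>{0..<N}. f j) + (\<Sum>j\<in>{N..<M}. f j)"
    using NM by (intro sum.atLeastLessThan_concat[symmetric]) auto
  finally have "(\<Sum>j\<le>J. of_rat (c j) * x ^ j) = (\<Sum>j\<in>{0..<N}. of_rat (c j) * x ^ j)
      + (\<Sum>j\<in>{N..<M}. of_rat (c j) * x ^ j) + (\<Sum>j\<in>{M..<Suc J}. of_rat (c j) * x ^ j)"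
    unfolding f_def .
  also have "(\<Sum>j\<in>{0..<N}. of_rat (c j) * x ^ j) = x ^ M * (\<Sum>j\<in>{0..<N}. W * of_rat (z j) * x ^ (r - 1 - M + j))"
    unfolding sum_distrib_left
  proof (intro sum.cong refl)
    fix j assume "j \<in> {0..<N}"
    then have "of_rat (c j) = x ^ (r - 1) * W * of_rat (z j)"
      using z W(1) by (simp add: of_rat_mult)
    moreover have "x ^ (r - 1) = x ^ M * x ^ (r - 1 - M)"
      using NM by (metis le_add_diff_inverse power_add)
    ultimately show "of_rat (c j) * x ^ j = x ^ M * (W * of_rat (z j) * x ^ (r - 1 - M + j))"
      by (simp add: power_add mult_ac)
  qed
  also have "(\<Sum>j\<in>{M..<Suc J}. of_rat (c j) * x ^ j) = x ^ M * (\<Sum>j\<in>{M..<Suc J}. of_rat (c j) * x ^ (j - M))"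
    unfolding sum_distrib_left by (intro sum.cong refl) (simp flip: power_add)
  finally have "(\<Sum>j\<le>J. of_rat (c j) * x ^ j) = (\<Sum>j\<in>{N..<M}. of_rat (c j) * x ^ j) + x ^ M * w"
    unfolding w_def by (simp add: algebra_simps)
  moreover have "w \<in> Zq r q"
    unfolding w_def using W(2) x c(1) z by (intro Zq_add Zq_sum Zq_mult Zq_power Zq_of_rat) auto
  ultimately show ?thesis by blast
qed

section \<open>The expansion of the Gauss sum\<close>

lemma cis_root_of_unity:
  assumes "0 < r"
  shows "cis (2 * pi / real r) ^ r = 1"
proof -
  have "cis (2 * pi / real r) ^ r = cis (real r * (2 * pi / real r))" by (rule Complex.DeMoivre)
  then show ?thesis using assms by simp
qed

lemma cis_root_of_unity_ne_1:
  assumes "2 < r"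
  shows "cis (2 * pi / real r) \<noteq> 1"
proof -
  have "0 < 2 * pi / real r" using assms by simp
  moreover have "2 * pi / real r < pi" using assms pi_gt_zero by (simp add: divide_less_eq)
  ultimately have "0 < sin (2 * pi / real r)" by (rule sin_gt_zero)
  then have "Im (cis (2 * pi / real r)) \<noteq> Im 1" by simp
  then show ?thesis by metis
qed

lemma middle_sum_expansion_coeff:
  assumes "l < (r - 1) div 2" "odd r"
  defines "h \<equiv> (r - 1) div 2"
  shows "(\<Sum>j\<in>{h - l..<h - l + h}. of_rat (fact h * of_nat (gauss_coeff r (2 * l) j)) * x ^ j)
    = (\<Sum>m = 0..(r - 3) div 2. of_rat (expansion_coeff l r m) * x ^ (h + m - l))"
proof -
  have "(\<Sum>j\<in>{h - l..<h - l + h}. of_rat (fact h * of_nat (gauss_coeff r (2 * l) j)) * x ^ j)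
      = (\<Sum>m\<in>{0..<h}. of_rat (fact h * of_nat (gauss_coeff r (2 * l) (m + (h - l)))) * x ^ (m + (h - l)))"
    using sum.shift_bounds_nat_ivl[of _ 0 "h - l" h] by (simp add: add.commute)
  also have "{0..<h} = {0..(r - 3) div 2}" using assms(1,2) unfolding h_def by (auto elim!: oddE)
  finally show ?thesis
    using assms(1) unfolding expansion_coeff_def h_def by (simp add: add.commute)
qed

lemma gauss_sum_expansion:
  assumes "prime r" "2 * l + 3 \<le> r"
  defines "q \<equiv> cis (2 * pi / real r)"
  shows "\<exists>u. (\<forall>i. coeff u i \<in> Zloc r) \<and>
    fact ((r - 1) div 2) * wgauss r (2 * l) q =
      (\<Sum>m = 0..(r - 3) div 2. of_rat (expansion_coeff l r m) * (q - 1) ^ ((r - 1) div 2 + m - l))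
      + (q - 1) ^ (r - 1 - l) * poly (map_poly of_rat u) q"
proof -
  define h where "h = (r - 1) div 2"
  define N where "N = h - l"
  define c :: "nat \<Rightarrow> rat" where "c j = fact h * of_nat (gauss_coeff r (2 * l) j)" for j
  have "odd r" using assms(1,2) by (intro prime_odd_nat) auto
  then have r: "r = 2 * h + 1" unfolding h_def by (auto elim!: oddE)
  have hl: "l < h" "r - 1 - l = N + h" "(r - 3) div 2 = h - 1"
    using assms(2) r unfolding N_def by auto
  obtain W where W: "W \<in> Zq r q" "of_nat r = (q - 1) ^ (r - 1) * W"
    using of_nat_eq_power_mult_Zq[of q r] cis_root_of_unity[of r] cis_root_of_unity_ne_1[of r]
      \<open>odd r\<close> assms(2) unfolding q_def by auto
  have low: "Zloc_cong r (c j) 0" if "j < N" for j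
    using gauss_coeff_cong_0[OF assms(1) r, of l j] that unfolding c_def N_def
    by (intro Zloc_cong_mult[OF Zloc_cong_refl, where y' = 0, simplified]) auto
  have "of_rat (fact h) = (fact h :: complex)" by (metis of_nat_fact of_rat_of_nat_eq)
  then have "fact h * wgauss r (2 * l) q = (\<Sum>j\<le>(r - 1)\<^sup>2. of_rat (c j) * (q - 1) ^ j)"
    using wgauss_shifted_expansion[of r "2 * l" "q - 1"]
    by (simp add: c_def sum_distrib_left of_rat_mult mult.assoc)
  moreover obtain w where w: "w \<in> Zq r q"
    "(\<Sum>j\<le>(r - 1)\<^sup>2. of_rat (c j) * (q - 1) ^ j)
      = (\<Sum>j\<in>{N..<N + h}. of_rat (c j) * (q - 1) ^ j) + (q - 1) ^ (N + h) * w"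
  proof (rule bexE[OF Zq_truncate_expansion[OF W(2,1) _ _ low]])
    show "q - 1 \<in> Zq r q" by (intro Zq_diff Zq_generator Zq_1)
    show "c j \<in> Zloc r" for j unfolding c_def by simp
    show "N \<le> N + h" and M: "N + h \<le> r - 1" using hl r by auto
    have "r - 1 \<le> (r - 1)\<^sup>2" by (simp add: power2_eq_square le_square)
    then show "N + h \<le> Suc ((r - 1)\<^sup>2)" using M by linarith
  qed
  moreover have "(\<Sum>j\<in>{N..<N + h}. of_rat (c j) * (q - 1) ^ j)
      = (\<Sum>m = 0..(r - 3) div 2. of_rat (expansion_coeff l r m) * (q - 1) ^ ((r - 1) div 2 + m - l))"
    unfolding c_def N_def h_def using hl(1) r unfolding h_def by (intro middle_sum_expansion_coeff) auto
  ultimately show ?thesis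
    using Zq_poly_eval[OF w(1)] hl(2) unfolding h_def by auto
qed

lemma expansion_coeff_fermat:
  "\<exists>c. fermat_fun (Hfun l m) c \<and> fermat_fun (\<lambda>r. expansion_coeff l r m) c"
proof -
  obtain c where c: "\<forall>\<^sub>F r in sequentially. prime r \<longrightarrow> Hfun l m r \<in> Zloc r \<and> Zloc_cong r (Hfun l m r) c"
    using Hfun_fermat_residue by blast
  have "\<forall>\<^sub>F r in sequentially.
      prime r \<longrightarrow> expansion_coeff l r m \<in> Zloc r \<and> Zloc_cong r (expansion_coeff l r m) c"
    using c eventually_ge_at_top[of "2 * l + 2 * m + 3"]
  proof eventually_elim
    case (elim r)
    show ?case
    proof
      assume "prime r"
      then have "Zloc_cong r (expansion_coeff l r m) (Hfun l m r)" "Zloc_cong r (Hfun l m r) c"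
        using elim expansion_coeff_cong_Hfun by auto
      then show "expansion_coeff l r m \<in> Zloc r \<and> Zloc_cong r (expansion_coeff l r m) c"
        using Zloc_expansion_coeff Zloc_cong_trans by blast
    qed
  qed
  then show ?thesis using c by (intro exI[of _ c] conjI fermat_funI)
qed

theorem lemma6p1:
  fixes l :: nat
  shows "\<exists>(a :: nat \<Rightarrow> nat \<Rightarrow> rat) (u :: nat \<Rightarrow> rat poly).
    (\<exists>R. \<forall>r. prime r \<and> odd r \<and> r \<ge> R \<longrightarrow>
        (let q = cis (2 * pi / real r) in
          (\<forall>m \<le> (r - 3) div 2. a r m \<in> Zloc r) \<and>
          (\<forall>i. coeff (u r) i \<in> Zloc r) \<and>
          fact ((r - 1) div 2) * wgauss r (2 * l) q =
            (\<Sum>m = 0..(r - 3) div 2. of_rat (a r m) * (q - 1) ^ ((r - 1) div 2 + m - l))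
            + (q - 1) ^ (r - 1 - l) * poly (map_poly of_rat (u r)) q)) \<and>
    (\<forall>m. \<exists>c. fermat_fun (Hfun l m) c \<and> fermat_fun (\<lambda>r. a r m) c)"
proof -
  define expansion where "expansion r u \<longleftrightarrow> (\<forall>i. coeff u i \<in> Zloc r) \<and>
      fact ((r - 1) div 2) * wgauss r (2 * l) (cis (2 * pi / real r)) =
        (\<Sum>m = 0..(r - 3) div 2. of_rat (expansion_coeff l r m) *
          (cis (2 * pi / real r) - 1) ^ ((r - 1) div 2 + m - l))
        + (cis (2 * pi / real r) - 1) ^ (r - 1 - l) * poly (map_poly of_rat u) (cis (2 * pi / real r))"
    for r u
  have "\<exists>u. expansion r u" if "prime r" "2 * l + 3 \<le> r" for r
    unfolding expansion_def using gauss_sum_expansion[OF that] .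
  then have "\<forall>r. \<exists>u. prime r \<and> 2 * l + 3 \<le> r \<longrightarrow> expansion r u" by blast
  then obtain u where u: "\<forall>r. prime r \<and> 2 * l + 3 \<le> r \<longrightarrow> expansion r (u r)"
    by (rule choice[THEN exE])
  show ?thesis
    unfolding Let_def
  proof (intro exI[of _ "expansion_coeff l"] exI[of _ u] conjI)
    show "\<forall>m. \<exists>c. fermat_fun (Hfun l m) c \<and> fermat_fun (\<lambda>r. expansion_coeff l r m) c"
      using expansion_coeff_fermat by blast
  qed (use u Zloc_expansion_coeff in \<open>unfold expansion_def, blast\<close>)
qed

end
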